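(* Let $V=\mathbb{K}^r$ be a finite-dimensional vector space over a field $\mathbb{K}$ and let $\Gamma$ be a locally finite graph. Then a locally specifiable linear map $\tau:V^\Gamma\to V^\Gamma$ is surjective if and only if its transpose $\tau'$ is pre-injective.
   Context: $V^\Gamma$ is the space of all maps from the vertex set of $\Gamma$ to $V$, and $V^\Gamma_0$ the subspace of finitely supported maps. A linear map $\tau:V^\Gamma\to V^\Gamma$ is locally specifiable if $\tau(f)(x)$ depends only on $f(x)$ and the values $f(y)$ for $y\sim x$; equivalently there are $r\times r$ matrices $A_{xy}$ (for $y=x$ or $y\sim x$) with $\tau(f)(x)=A_{xx}f(x)+\sum_{y\sim x}A_{xy}f(y)$. Its transpose $\tau'$ is the locally specifiable linear map whose matrix with respect to the basis $\{\delta_x^i\}$ of $V^\Gamma_0$ ($\delta_x^i(x)=e_i$, $\delta_x^i(y)=0$ for $y\ne x$) is the transpose of that of $\tau$, i.e. $\tau'(f)(x)=A_{xx}^{T}f(x)+\sum_{y\sim x}A_{yx}^{T}f(y)$. A linear map on $V^\Gamma$ is pre-injective if its restriction to $V^\Gamma_0$ is injective. *)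

theory Defs
  imports "HOL-Analysis.Analysis"
begin

definition graph :: "('v \<Rightarrow> 'v \<Rightarrow> bool) \<Rightarrow> bool" where
  "graph E \<longleftrightarrow> (\<forall>x y. E x y \<longrightarrow> E y x) \<and> (\<forall>x. \<not> E x x)"

definition locally_finite :: "('v \<Rightarrow> 'v \<Rightarrow> bool) \<Rightarrow> bool" where
  "locally_finite E \<longleftrightarrow> (\<forall>x. finite {y. E x y})"

text \<open>V = K^r is modelled as 'k^'n with 'n a finite index type (r = CARD('n)).
  The locally specifiable map with matrices A x y (used for y = x or y adjacent to x).\<close>
definition ls_map ::
  "('v \<Rightarrow> 'v \<Rightarrow> bool) \<Rightarrow> ('v \<Rightarrow> 'v \<Rightarrow> 'k::field^'n::finite^'n) \<Rightarrow> ('v \<Rightarrow> 'k^'n) \<Rightarrow> ('v \<Rightarrow> 'k^'n)" where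
  "ls_map E A f = (\<lambda>x. A x x *v f x + (\<Sum>y\<in>{y. E x y}. A x y *v f y))"

definition ls_transpose ::
  "('v \<Rightarrow> 'v \<Rightarrow> bool) \<Rightarrow> ('v \<Rightarrow> 'v \<Rightarrow> 'k::field^'n::finite^'n) \<Rightarrow> ('v \<Rightarrow> 'k^'n) \<Rightarrow> ('v \<Rightarrow> 'k^'n)" where
  "ls_transpose E A f = (\<lambda>x. transpose (A x x) *v f x + (\<Sum>y\<in>{y. E x y}. transpose (A y x) *v f y))"

definition fin_supp :: "('v \<Rightarrow> 'k::zero^'n) set" where
  "fin_supp = {f. finite {x. f x \<noteq> 0}}"

definition pre_injective :: "(('v \<Rightarrow> 'k::zero^'n) \<Rightarrow> ('v \<Rightarrow> 'k^'n)) \<Rightarrow> bool" where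
  "pre_injective \<tau> \<longleftrightarrow> inj_on \<tau> fin_supp"

end

theory Submission
  imports Defs "HOL-Library.Function_Algebras"
begin

text \<open>The space \<open>V\<^sup>\<Gamma>\<close> of all configurations is the algebraic dual of the space \<open>V\<^sub>0\<^sup>\<Gamma>\<close> of
  finitely supported ones, via the pairing \<open>\<langle>f, g\<rangle> = \<Sum>\<^sub>x f x \<cdot> g x\<close>, and for a locally
  finite graph \<open>\<tau>'\<close> maps \<open>V\<^sub>0\<^sup>\<Gamma>\<close> into itself and is the adjoint of \<open>\<tau>\<close>:
  \<open>\<langle>\<tau> f, g\<rangle> = \<langle>f, \<tau>' g\<rangle>\<close>. If \<open>\<tau>\<close> is surjective, pairing \<open>g\<close> with a preimage of the
  unit configuration \<open>\<delta>\<^sub>x\<^sup>i\<close> shows that \<open>\<tau>' g = 0\<close> forces \<open>g = 0\<close>. Conversely, if \<open>\<tau>'\<close> is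
  injective on \<open>V\<^sub>0\<^sup>\<Gamma>\<close>, it has a linear left inverse, and the functional \<open>g \<mapsto> \<langle>h, \<tau>'\<^sup>-\<^sup>1 g\<rangle>\<close>
  is represented by some \<open>f\<close>, which then satisfies \<open>\<tau> f = h\<close>.\<close>

definition dot :: "'k::comm_semiring_0^'n::finite \<Rightarrow> 'k^'n \<Rightarrow> 'k" where
  "dot u w = (\<Sum>i\<in>UNIV. u $ i * w $ i)"

lemma dot_commute: "dot u w = dot w u"
  by (simp add: dot_def mult.commute)

lemma dot_zero_right [simp]: "dot u 0 = 0"
  by (simp add: dot_def)

lemma dot_add_left: "dot (u + v) w = dot u w + dot v w"
  by (simp add: dot_def distrib_right sum.distrib)

lemma dot_sum_left: "dot (\<Sum>y\<in>F. u y) w = (\<Sum>y\<in>F. dot (u y) w)"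
  unfolding dot_def by (simp add: sum_component sum_distrib_right sum.swap[of _ F])

lemma dot_axis_left: "dot (axis i 1) w = (w :: 'k::comm_semiring_1^'n::finite) $ i"
proof -
  have "dot (axis i 1) w = (\<Sum>j\<in>UNIV. if j = i then w $ j else 0)"
    unfolding dot_def by (rule sum.cong) (auto simp: axis_def)
  then show ?thesis
    by simp
qed

lemma dot_matrix_vector_mult:
  "dot (M *v u) w = dot u (transpose M *v (w :: 'k::comm_semiring_1^'n::finite))"
proof -
  have "dot (M *v u) w = (\<Sum>i\<in>UNIV. \<Sum>j\<in>UNIV. M$i$j * u$j * w$i)"
    by (simp add: dot_def matrix_vector_mult_def sum_distrib_right)
  also have "\<dots> = (\<Sum>j\<in>UNIV. \<Sum>i\<in>UNIV. M$i$j * u$j * w$i)"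
    by (rule sum.swap)
  also have "\<dots> = dot u (transpose M *v w)"
    by (simp add: dot_def matrix_vector_mult_def transpose_def sum_distrib_left mult_ac)
  finally show ?thesis .
qed

definition fscale :: "'k::field \<Rightarrow> ('v \<Rightarrow> 'k^'n) \<Rightarrow> ('v \<Rightarrow> 'k^'n)" where
  "fscale c f = (\<lambda>x. c *s f x)"

lemma vector_space_fscale: "vector_space (fscale :: 'k::field \<Rightarrow> ('v \<Rightarrow> 'k^'n) \<Rightarrow> _)"
  by unfold_locales
    (auto simp: fscale_def fun_eq_iff vector_add_ldistrib vector_sadd_rdistrib vector_smult_assoc)

lemma fscale_apply [simp]: "fscale c f x = c *s f x"
  by (simp add: fscale_def)

abbreviation support :: "('v \<Rightarrow> 'k::zero^'n) \<Rightarrow> 'v set" where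
  "support g \<equiv> {x. g x \<noteq> 0}"

lemma subspace_fin_supp: "module.subspace fscale (fin_supp :: ('v \<Rightarrow> 'k::field^'n) set)"
proof -
  interpret vector_space "fscale :: 'k \<Rightarrow> ('v \<Rightarrow> 'k^'n) \<Rightarrow> _"
    by (rule vector_space_fscale)
  have "support (f + g) \<subseteq> support f \<union> support g" for f g :: "'v \<Rightarrow> 'k^'n"
    by auto
  moreover have "support (fscale c f) \<subseteq> support f" for c and f :: "'v \<Rightarrow> 'k^'n"
    by auto
  ultimately show ?thesis
    unfolding subspace_def fin_supp_def by (auto intro: finite_subset)
qed

lemma linear_ls_transpose: "Vector_Spaces.linear fscale fscale (ls_transpose E A)"
  unfolding Vector_Spaces.linear_iff
  by (simp add: vector_space_fscale ls_transpose_def fun_eq_iff matrix_vector_right_distrib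
      sum.distrib add_ac vector_scalar_commute sum_cmul vector_add_ldistrib)

lemma support_ls_transpose_subset:
  assumes "graph E"
  shows "support (ls_transpose E A g) \<subseteq> support g \<union> (\<Union>x\<in>support g. {y. E x y})"
  using assms by (force simp: ls_transpose_def graph_def intro: sum.neutral)

lemma ls_transpose_fin_supp:
  assumes "graph E" and "locally_finite E" and "g \<in> fin_supp"
  shows "ls_transpose E A g \<in> fin_supp"
  using assms support_ls_transpose_subset[OF assms(1), of A g]
  by (auto simp: fin_supp_def locally_finite_def intro: finite_subset)

definition delta :: "'v \<Rightarrow> 'n \<Rightarrow> ('v \<Rightarrow> 'k::field^'n::finite)" where
  "delta x i = (\<lambda>y. if y = x then axis i 1 else 0)"

lemma delta_component: "delta x i y $ k = (if y = x \<and> i = k then 1 else 0)"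
  by (simp add: delta_def axis_def)

lemma delta_fin_supp: "delta x i \<in> fin_supp"
  by (auto simp: fin_supp_def delta_def intro: finite_subset[of _ "{x}"])

lemma sum_fun_apply: "(\<Sum>y\<in>S. u y) x = (\<Sum>y\<in>S. u y x :: 'b::comm_monoid_add)"
  by (induction S rule: infinite_finite_induct) auto

lemma fin_supp_expansion:
  assumes "finite S" and "support g \<subseteq> S"
  shows "g = (\<Sum>y\<in>S. \<Sum>j\<in>UNIV. fscale (g y $ j) (delta y j))"
proof -
  have "(\<Sum>j\<in>UNIV. g y $ j * delta y j z $ k) = (if y = z then g z $ k else 0)" for y z k
  proof -
    have "(\<Sum>j\<in>UNIV. g y $ j * delta y j z $ k) = (\<Sum>j\<in>UNIV. if y = z \<and> j = k then g z $ k else 0)"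
      by (rule sum.cong) (auto simp: delta_component)
    also have "\<dots> = (if y = z then g z $ k else 0)"
      by (cases "y = z") auto
    finally show ?thesis .
  qed
  then have "(\<Sum>y\<in>S. \<Sum>j\<in>UNIV. fscale (g y $ j) (delta y j)) z $ k = g z $ k" for z k
    using assms by (force simp: sum_fun_apply sum_component)
  then show ?thesis
    by (simp add: fun_eq_iff vec_eq_iff)
qed

text \<open>Only meaningful for finitely supported \<open>g\<close>; otherwise the sum is the junk value \<open>0\<close>.\<close>
definition pairing :: "('v \<Rightarrow> 'k::field^'n::finite) \<Rightarrow> ('v \<Rightarrow> 'k^'n) \<Rightarrow> 'k" where
  "pairing f g = (\<Sum>x\<in>support g. dot (f x) (g x))"

lemma pairing_eq_sum:
  assumes "finite D" and "support g \<subseteq> D"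
  shows "pairing f g = (\<Sum>x\<in>D. dot (f x) (g x))"
  unfolding pairing_def using assms by (intro sum.mono_neutral_left) auto

lemma pairing_zero_right [simp]: "pairing f 0 = 0"
  by (simp add: pairing_def)

lemma pairing_delta_left:
  assumes "g \<in> fin_supp"
  shows "pairing (delta x i) g = g x $ i"
proof -
  have "pairing (delta x i) g = (\<Sum>y\<in>insert x (support g). dot (delta x i y) (g y))"
    using assms by (intro pairing_eq_sum) (auto simp: fin_supp_def)
  also have "\<dots> = g x $ i"
    using assms by (simp add: fin_supp_def delta_def dot_axis_left dot_commute[of 0]
        if_distrib[of "\<lambda>u. dot u _"] cong: if_cong)
  finally show ?thesis .
qed

lemma pairing_delta_right: "pairing f (delta x i) = f x $ i"
  by (simp add: pairing_eq_sum[of "{x}"] delta_def dot_commute[of "f x"] dot_axis_left)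

lemma pairing_add_right:
  assumes "g \<in> fin_supp" and "g' \<in> fin_supp"
  shows "pairing f (g + g') = pairing f g + pairing f g'"
proof -
  define D where "D = support g \<union> support g'"
  have "finite D"
    using assms by (simp add: D_def fin_supp_def)
  moreover have "support (g + g') \<subseteq> D"
    by (auto simp: D_def)
  ultimately show ?thesis
    by (simp add: pairing_eq_sum[of D] D_def dot_commute[of "f _"] dot_add_left sum.distrib)
qed

lemma pairing_fscale_right: "pairing f (fscale c g) = c * pairing f g"
proof (cases "c = 0")
  case False
  then have "support (fscale c g) = support g"
    by auto
  then show ?thesis
    by (simp add: pairing_def dot_def sum_distrib_left mult_ac)
qed (simp add: pairing_def)

lemma linear_pairing_comp:
  fixes \<sigma> :: "('u \<Rightarrow> 'k::field^'m) \<Rightarrow> ('v \<Rightarrow> 'k^'n::finite)"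
  assumes "Vector_Spaces.linear fscale fscale \<sigma>" and "range \<sigma> \<subseteq> fin_supp"
  shows "Vector_Spaces.linear fscale (*) (\<lambda>g. pairing h (\<sigma> g))"
  unfolding Vector_Spaces.linear_iff
proof (intro conjI allI)
  interpret \<sigma>: Vector_Spaces.linear fscale fscale \<sigma>
    by (rule assms(1))
  show "vector_space (fscale :: 'k \<Rightarrow> ('u \<Rightarrow> 'k^'m) \<Rightarrow> _)" "vector_space ((*) :: 'k \<Rightarrow> _)"
    by (simp_all add: vector_space_fscale vector_space_over_itself.vector_space_axioms)
  fix g g' :: "'u \<Rightarrow> 'k^'m" and c :: 'k
  show "pairing h (\<sigma> (g + g')) = pairing h (\<sigma> g) + pairing h (\<sigma> g')"
    using assms(2) by (simp add: \<sigma>.add pairing_add_right rangeI subset_iff)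
  show "pairing h (\<sigma> (fscale c g)) = c * pairing h (\<sigma> g)"
    by (simp add: \<sigma>.scale pairing_fscale_right)
qed

lemma linear_functional_representable:
  assumes "Vector_Spaces.linear fscale (*) (\<phi> :: ('v \<Rightarrow> 'k::field^'n::finite) \<Rightarrow> 'k)"
  obtains f where "\<And>g. g \<in> fin_supp \<Longrightarrow> pairing f g = \<phi> g"
proof
  interpret \<phi>: Vector_Spaces.linear fscale "(*)" \<phi>
    by (rule assms)
  define f where "f y = (\<chi> j. \<phi> (delta y j))" for y
  fix g :: "'v \<Rightarrow> 'k^'n" assume "g \<in> fin_supp"
  then have "finite (support g)"
    by (simp add: fin_supp_def)
  then have "\<phi> g = (\<Sum>y\<in>support g. \<Sum>j\<in>UNIV. g y $ j * \<phi> (delta y j))"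
    by (subst fin_supp_expansion[of "support g" g]) (simp_all add: \<phi>.sum \<phi>.scale)
  then show "pairing f g = \<phi> g"
    by (simp add: pairing_def dot_def f_def mult.commute)
qed

lemma sum_dot_ls_map_eq:
  fixes A :: "'v \<Rightarrow> 'v \<Rightarrow> 'k::field^'n::finite^'n"
  assumes "graph E" and "locally_finite E" and "finite S" and "support g \<subseteq> S"
  defines "D \<equiv> S \<union> (\<Union>x\<in>S. {y. E x y})"
  shows "(\<Sum>x\<in>D. dot (ls_map E A f x) (g x)) = (\<Sum>y\<in>D. dot (f y) (ls_transpose E A g y))"
proof -
  have "finite D"
    unfolding D_def using assms(2,3) by (auto simp: locally_finite_def)
  have sym: "E x y \<Longrightarrow> E y x" for x y
    using assms(1) by (auto simp: graph_def)
  have fin_nbhd: "finite {y. E x y}" for x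
    using assms(2) by (auto simp: locally_finite_def)
  define T where "T x y = dot (A x y *v f y) (g x)" for x y
  \<comment> \<open>The off-diagonal terms are a sum over the edges leaving \<open>S\<close>, read from either end.\<close>
  have diagonal: "(\<Sum>x\<in>D. dot (A x x *v f x) (g x)) = (\<Sum>y\<in>D. dot (f y) (transpose (A y y) *v g y))"
    by (simp add: dot_matrix_vector_mult del: transpose_matrix_vector)
  have "(\<Sum>z\<in>{z. E x z}. T x z) = (\<Sum>y\<in>{y. y \<in> D \<and> E x y}. T x y)" if "x \<in> D" for x
  proof (cases "x \<in> S")
    case True
    then have "{z. E x z} = {y. y \<in> D \<and> E x y}"
      by (auto simp: D_def)
    then show ?thesis
      by simp
  next
    case False
    then have "g x = 0"
      using assms(4) by blast
    then show ?thesis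
      by (simp add: T_def)
  qed
  then have "(\<Sum>x\<in>D. \<Sum>y\<in>{y. E x y}. T x y) = (\<Sum>x\<in>D. \<Sum>y\<in>{y. y \<in> D \<and> E x y}. T x y)"
    by simp
  also have "\<dots> = (\<Sum>y\<in>D. \<Sum>x\<in>{x. x \<in> D \<and> E x y}. T x y)"
    by (rule sum.swap_restrict[OF \<open>finite D\<close> \<open>finite D\<close>])
  also have "\<dots> = (\<Sum>y\<in>D. \<Sum>z\<in>{z. E y z}. dot (f y) (transpose (A z y) *v g z))"
  proof (rule sum.cong[OF refl])
    fix y
    have "(\<Sum>z\<in>{z. E y z}. dot (f y) (transpose (A z y) *v g z)) = (\<Sum>z\<in>{z. E y z}. T z y)"
      by (simp add: T_def dot_matrix_vector_mult del: transpose_matrix_vector)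
    also have "\<dots> = (\<Sum>x\<in>{x. x \<in> D \<and> E x y}. T x y)"
      using assms(4) sym by (intro sum.mono_neutral_right[OF fin_nbhd]) (auto simp: D_def T_def)
    finally show "(\<Sum>x\<in>{x. x \<in> D \<and> E x y}. T x y)
        = (\<Sum>z\<in>{z. E y z}. dot (f y) (transpose (A z y) *v g z))" ..
  qed
  finally have off_diagonal: "(\<Sum>x\<in>D. \<Sum>y\<in>{y. E x y}. T x y)
      = (\<Sum>y\<in>D. \<Sum>z\<in>{z. E y z}. dot (f y) (transpose (A z y) *v g z))" .
  have expand_ls_map: "(\<Sum>x\<in>D. dot (ls_map E A f x) (g x))
      = (\<Sum>x\<in>D. dot (A x x *v f x) (g x)) + (\<Sum>x\<in>D. \<Sum>y\<in>{y. E x y}. T x y)"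
    by (simp add: ls_map_def dot_add_left dot_sum_left sum.distrib T_def)
  have expand_ls_transpose: "(\<Sum>y\<in>D. dot (f y) (ls_transpose E A g y))
      = (\<Sum>y\<in>D. dot (f y) (transpose (A y y) *v g y))
        + (\<Sum>y\<in>D. \<Sum>z\<in>{z. E y z}. dot (f y) (transpose (A z y) *v g z))"
    by (simp add: ls_transpose_def dot_commute[of "f _"] dot_add_left dot_sum_left sum.distrib
        del: transpose_matrix_vector)
  show ?thesis
    unfolding expand_ls_map expand_ls_transpose diagonal off_diagonal ..
qed

lemma pairing_ls_map:
  assumes "graph E" and "locally_finite E" and "g \<in> fin_supp"
  shows "pairing (ls_map E A f) g = pairing f (ls_transpose E A g)"
proof -
  define S where "S = support g"
  define D where "D = S \<union> (\<Union>x\<in>S. {y. E x y})"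
  have "finite S"
    using assms(3) by (simp add: S_def fin_supp_def)
  then have "finite D"
    using assms(2) by (auto simp: D_def locally_finite_def)
  have "pairing (ls_map E A f) g = (\<Sum>x\<in>D. dot (ls_map E A f x) (g x))"
    using \<open>finite D\<close> by (rule pairing_eq_sum) (auto simp: D_def S_def)
  also have "\<dots> = (\<Sum>y\<in>D. dot (f y) (ls_transpose E A g y))"
    unfolding D_def using \<open>finite S\<close> by (rule sum_dot_ls_map_eq[OF assms(1,2)]) (simp add: S_def)
  also have "\<dots> = pairing f (ls_transpose E A g)"
    using \<open>finite D\<close> support_ls_transpose_subset[OF assms(1), of A g]
    by (intro pairing_eq_sum[symmetric]) (simp_all add: D_def S_def)
  finally show ?thesis .
qed

lemma pre_injective_ls_transpose_if_surj:
  assumes "graph E" and "locally_finite E" and "surj (ls_map E A)"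
  shows "pre_injective (ls_transpose E A)"
proof -
  interpret \<tau>': Vector_Spaces.linear fscale fscale "ls_transpose E A"
    by (rule linear_ls_transpose)
  have "g = 0" if "g \<in> fin_supp" and "ls_transpose E A g = 0" for g
  proof -
    have "g x $ i = 0" for x i
    proof -
      obtain f where "ls_map E A f = delta x i"
        using assms(3) by (metis surjD)
      then have "g x $ i = pairing (ls_map E A f) g"
        using pairing_delta_left[OF \<open>g \<in> fin_supp\<close>] by simp
      also have "\<dots> = 0"
        using that by (simp add: pairing_ls_map[OF assms(1,2)])
      finally show ?thesis .
    qed
    then show ?thesis
      by (simp add: fun_eq_iff vec_eq_iff)
  qed
  then show ?thesis
    unfolding pre_injective_def \<tau>'.inj_on_iff_eq_0[OF subspace_fin_supp] by blast
qed

lemma surj_ls_map_if_pre_injective: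
  fixes A :: "'v \<Rightarrow> 'v \<Rightarrow> 'k::field^'n::finite^'n"
  assumes "graph E" and "locally_finite E" and "pre_injective (ls_transpose E A)"
  shows "surj (ls_map E A)"
  unfolding surj_def
proof
  interpret vector_space_pair "fscale :: 'k \<Rightarrow> ('v \<Rightarrow> 'k^'n) \<Rightarrow> _" fscale
    by (simp add: vector_space_pair_def vector_space_fscale)
  obtain \<sigma> where \<sigma>_fin_supp: "range \<sigma> \<subseteq> fin_supp" and \<sigma>_linear: "Vector_Spaces.linear fscale fscale \<sigma>"
    and \<sigma>_inverse: "\<And>g. g \<in> fin_supp \<Longrightarrow> \<sigma> (ls_transpose E A g) = g"
    using linear_exists_left_inverse_on[OF linear_ls_transpose subspace_fin_supp]
      assms(3)[unfolded pre_injective_def] by blast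
  fix h :: "'v \<Rightarrow> 'k^'n"
  have "Vector_Spaces.linear fscale (*) (\<lambda>g. pairing h (\<sigma> g))"
    using \<sigma>_linear \<sigma>_fin_supp by (rule linear_pairing_comp)
  then obtain f where f: "\<And>g. g \<in> fin_supp \<Longrightarrow> pairing f g = pairing h (\<sigma> g)"
    using linear_functional_representable by blast
  have "ls_map E A f x $ i = h x $ i" for x i
  proof -
    have "ls_map E A f x $ i = pairing f (ls_transpose E A (delta x i))"
      by (simp add: pairing_delta_right[symmetric] pairing_ls_map[OF assms(1,2)] delta_fin_supp)
    also have "\<dots> = h x $ i"
      by (simp add: f ls_transpose_fin_supp[OF assms(1,2)] delta_fin_supp \<sigma>_inverse
          pairing_delta_right)
    finally show ?thesis .
  qed
  then show "\<exists>f. h = ls_map E A f"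
    by (metis vec_eq_iff ext)
qed

theorem theorem1p8:
  fixes E :: "'v \<Rightarrow> 'v \<Rightarrow> bool"
    and A :: "'v \<Rightarrow> 'v \<Rightarrow> 'k::field^'n::finite^'n"
  assumes "graph E" and "locally_finite E"
  shows "surj (ls_map E A) \<longleftrightarrow> pre_injective (ls_transpose E A)"
  using pre_injective_ls_transpose_if_surj[OF assms] surj_ls_map_if_pre_injective[OF assms]
  by blast

end
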